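(* Let $K$ be a field with a non-trivial non-Archimedean valuation $|\cdot|$, let $X$ be a complete non-Archimedean normed space over $K$, and let $G$ be an additive (abelian) group. Fix $k\in\mathbb N$, and assume $|2k^3|\neq 0$. For $f:G\to X$ define $$Df(x,y)=f(kx+y)+f(kx-y)-k[f(x+y)+f(x-y)]-2(k^3-k)f(x)\qquad (x,y\in G).$$ Let $\varphi:G\times G\to[0,\infty)$ be a function such that $$\lim_{n\to\infty}\frac{\varphi(k^nx,k^ny)}{|k|^{3n}}=0\quad\text{for all }x,y\in G,$$ and such that for each $x\in G$ the limit $$\tilde\varphi(x):=\lim_{n\to\infty}\max\Big\{\frac{\varphi(k^jx,0)}{|k|^{3j}}:\ 0\le j<n\Big\}$$ exists. Suppose $f:G\to X$ satisfies $\|Df(x,y)\|\le\varphi(x,y)$ for all $x,y\in G$. Then there exists a cubic mapping $C:G\to X$ (i.e. $DC(x,y)=0$ for all $x,y\in G$) such that $$\|C(x)-f(x)\|\le\frac{1}{|2k^3|}\tilde\varphi(x)\quad\text{for all }x\in G.$$ Moreover, if $$\lim_{i\to\infty}\lim_{n\to\infty}\max\Big\{\frac{\varphi(k^jx,0)}{|k|^{3j}}:\ i\le j<n+i\Big\}=0\quad\text{for all }x\in G,$$ then $C$ is the unique cubic mapping satisfying this inequality.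
   Context: A non-Archimedean field is a field $K$ with a function $|\cdot|:K\to[0,\infty)$ such that $|r|=0$ iff $r=0$, $|rs|=|r||s|$, and $|r+s|\le\max\{|r|,|s|\}$. A non-Archimedean norm on a $K$-vector space $X$ is a function $\|\cdot\|:X\to\mathbb R$ with $\|x\|=0$ iff $x=0$, $\|rx\|=|r|\|x\|$, and $\|x+y\|\le\max\{\|x\|,\|y\|\}$; complete means every Cauchy sequence converges. Integers are regarded as elements of $K$, and $|k|$ denotes the valuation of $k$ in $K$. *)

theory Defs
  imports Complex_Main
begin

definition nonarch_field :: "('k::field \<Rightarrow> real) \<Rightarrow> bool" where
  "nonarch_field av \<longleftrightarrow>
     (\<forall>r. av r \<ge> 0) \<and> (\<forall>r. av r = 0 \<longleftrightarrow> r = 0) \<and>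
     (\<forall>r s. av (r * s) = av r * av s) \<and>
     (\<forall>r s. av (r + s) \<le> max (av r) (av s))"

definition nontrivial_val :: "('k::field \<Rightarrow> real) \<Rightarrow> bool" where
  "nontrivial_val av \<longleftrightarrow> (\<exists>r. av r \<noteq> 0 \<and> av r \<noteq> 1)"

definition nonarch_norm ::
  "('k::field \<Rightarrow> real) \<Rightarrow> ('k \<Rightarrow> 'x::ab_group_add \<Rightarrow> 'x) \<Rightarrow> ('x \<Rightarrow> real) \<Rightarrow> bool" where
  "nonarch_norm av sm nr \<longleftrightarrow>
     (\<forall>x. nr x = 0 \<longleftrightarrow> x = 0) \<and>
     (\<forall>r x. nr (sm r x) = av r * nr x) \<and>
     (\<forall>x y. nr (x + y) \<le> max (nr x) (nr y))"

definition complete_wrt :: "('x::ab_group_add \<Rightarrow> real) \<Rightarrow> bool" where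
  "complete_wrt nr \<longleftrightarrow>
     (\<forall>s :: nat \<Rightarrow> 'x.
        (\<forall>e>0. \<exists>N. \<forall>m\<ge>N. \<forall>n\<ge>N. nr (s m - s n) < e) \<longrightarrow>
        (\<exists>l. (\<lambda>n. nr (s n - l)) \<longlonglongrightarrow> 0))"

primrec gmul :: "nat \<Rightarrow> 'g::ab_group_add \<Rightarrow> 'g" where
  "gmul 0 x = 0"
| "gmul (Suc n) x = x + gmul n x"

definition Dop ::
  "('k::field \<Rightarrow> 'x::ab_group_add \<Rightarrow> 'x) \<Rightarrow> nat \<Rightarrow> ('g::ab_group_add \<Rightarrow> 'x) \<Rightarrow> 'g \<Rightarrow> 'g \<Rightarrow> 'x" where
  "Dop sm k f x y =
     f (gmul k x + y) + f (gmul k x - y)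
     - sm (of_nat k) (f (x + y) + f (x - y))
     - sm (2 * ((of_nat k) ^ 3 - of_nat k)) (f x)"

definition cubic_map ::
  "('k::field \<Rightarrow> 'x::ab_group_add \<Rightarrow> 'x) \<Rightarrow> nat \<Rightarrow> ('g::ab_group_add \<Rightarrow> 'x) \<Rightarrow> bool" where
  "cubic_map sm k C \<longleftrightarrow> (\<forall>x y. Dop sm k C x y = 0)"

end

theory Submission
  imports Defs
begin

text \<open>Hyers' direct method. Putting \<open>y = 0\<close> gives \<open>Df(x,0) = 2 f(kx) - 2k^3 f(x)\<close>, so
  consecutive terms of \<open>s_n(x) = k^(-3n) f(k^n x)\<close> differ by at most
  \<open>\<phi>(k^n x, 0) / (|2k^3| |k|^(3n))\<close>. These steps tend to zero, which in an ultrametric space already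
  makes \<open>s_n(x)\<close> Cauchy; its limit is \<open>C(x)\<close>, and the ultrametric inequality bounds
  \<open>\<parallel>s_n(x) - f(x)\<parallel>\<close> by the largest of the first \<open>n\<close> steps, which gives the estimate. Since
  \<open>Ds_n(x,y) = k^(-3n) Df(k^n x, k^n y)\<close> tends to zero, \<open>C\<close> is cubic. Every cubic map satisfies
  \<open>C(k^i x) = k^(3i) C(x)\<close>, so two cubic maps close to \<open>f\<close> differ at \<open>x\<close> by at most \<open>|k|^(-3i)\<close>
  times the error bound at \<open>k^i x\<close>, which is the tail maximum from index \<open>i\<close> on.\<close>

lemma gmul_add_left: "gmul (m + n) x = gmul m x + gmul n x"
  by (induction m) (auto simp: add.assoc)

lemma gmul_mult: "gmul (m * n) x = gmul m (gmul n x)"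
  by (induction m) (auto simp: gmul_add_left)

lemma gmul_add_right: "gmul n (x + y) = gmul n x + gmul n y"
  by (induction n) (auto simp: algebra_simps)

lemma gmul_zero_right [simp]: "gmul n 0 = 0"
  by (induction n) auto

lemma gmul_minus_right: "gmul n (- x) = - gmul n x"
  by (induction n) (auto simp: algebra_simps)

lemma gmul_diff_right: "gmul n (x - y) = gmul n x - gmul n y"
  using gmul_add_right[of n x "- y"] by (simp add: gmul_minus_right)

context vector_space
begin

lemma scale_two: "scale 2 x = x + x"
  by (metis one_add_one scale_left_distrib scale_one)

lemma Dop_zero_right: "Dop scale k F x 0 = scale 2 (F (gmul k x)) - scale (2 * of_nat k ^ 3) (F x)"
proof -
  have "scale (of_nat k) (F x + F x) = scale (2 * of_nat k) (F x)"
    by (simp add: scale_two[symmetric] mult.commute)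
  moreover have "scale (2 * (of_nat k ^ 3 - of_nat k)) (F x)
      = scale (2 * of_nat k ^ 3) (F x) - scale (2 * of_nat k) (F x)"
    by (simp add: right_diff_distrib scale_left_diff_distrib)
  ultimately show ?thesis
    unfolding Dop_def by (simp add: scale_two)
qed

lemma Dop_diff: "Dop scale k (\<lambda>z. F z - G z) x y = Dop scale k F x y - Dop scale k G x y"
  unfolding Dop_def by (simp add: scale_right_diff_distrib scale_right_distrib algebra_simps)

lemma Dop_scale_gmul:
  "Dop scale k (\<lambda>z. scale c (F (gmul m z))) x y = scale c (Dop scale k F (gmul m x) (gmul m y))"
  unfolding Dop_def
  by (simp add: gmul_add_right gmul_diff_right gmul_mult[symmetric] mult.commute
      scale_right_diff_distrib scale_right_distrib)

lemma cubic_map_gmul: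
  assumes "cubic_map scale k C" and "(2::'a) \<noteq> 0"
  shows "C (gmul k x) = scale (of_nat k ^ 3) (C x)"
proof -
  have "Dop scale k C x 0 = 0"
    using assms(1) by (simp add: cubic_map_def)
  then have "scale 2 (C (gmul k x)) = scale 2 (scale (of_nat k ^ 3) (C x))"
    by (simp add: Dop_zero_right)
  then show ?thesis
    using assms(2) scale_cancel_left by blast
qed

lemma cubic_map_gmul_power:
  assumes "cubic_map scale k C" and "(2::'a) \<noteq> 0"
  shows "C (gmul (k ^ i) x) = scale (of_nat k ^ (3 * i)) (C x)"
proof (induction i)
  case 0
  then show ?case by simp
next
  case (Suc i)
  have "C (gmul (k ^ Suc i) x) = scale (of_nat k ^ 3) (C (gmul (k ^ i) x))"
    using cubic_map_gmul[OF assms] by (simp add: gmul_mult)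
  also have "\<dots> = scale (of_nat k ^ 3 * of_nat k ^ (3 * i)) (C x)"
    using Suc.IH by simp
  finally show ?case
    by (simp add: power_add[symmetric])
qed

end

locale nonarch_normed_space = vector_space sm
  for sm :: "'k::field \<Rightarrow> 'x::ab_group_add \<Rightarrow> 'x" +
  fixes av :: "'k \<Rightarrow> real" and nr :: "'x \<Rightarrow> real"
  assumes nonarch_field: "nonarch_field av"
    and nonarch_norm: "nonarch_norm av sm nr"
    and complete: "complete_wrt nr"
begin

lemma av_nonneg: "av r \<ge> 0"
  using nonarch_field by (simp add: nonarch_field_def)

lemma av_eq_0_iff: "av r = 0 \<longleftrightarrow> r = 0"
  using nonarch_field by (simp add: nonarch_field_def)

lemma av_pos: "r \<noteq> 0 \<Longrightarrow> av r > 0"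
  using av_nonneg av_eq_0_iff by (metis less_eq_real_def)

lemma av_mult: "av (r * s) = av r * av s"
  using nonarch_field by (simp add: nonarch_field_def)

lemma av_one: "av 1 = 1"
  using av_mult[of 1 1] av_eq_0_iff[of 1] by simp

lemma av_inverse: "av (inverse r) = inverse (av r)"
proof (cases "r = 0")
  case True
  then show ?thesis using av_eq_0_iff[of 0] by simp
next
  case False
  then have "av r * av (inverse r) = 1"
    using av_mult[of r "inverse r"] av_one by simp
  then show ?thesis
    using inverse_unique by metis
qed

lemma av_power: "av (r ^ n) = av r ^ n"
  by (induction n) (auto simp: av_one av_mult)

lemma av_minus_one: "av (- 1) = 1"
proof -
  have "av (- 1) * av (- 1) = 1"
    using av_mult[of "- 1" "- 1"] av_one by simp
  then show ?thesis
    using av_nonneg by (metis abs_of_nonneg abs_square_eq_1 power2_eq_square)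
qed

lemma nr_eq_0_iff: "nr x = 0 \<longleftrightarrow> x = 0"
  using nonarch_norm by (simp add: nonarch_norm_def)

lemma nr_scale: "nr (sm r x) = av r * nr x"
  using nonarch_norm by (simp add: nonarch_norm_def)

lemma nr_add: "nr (x + y) \<le> max (nr x) (nr y)"
  using nonarch_norm by (simp add: nonarch_norm_def)

lemma nr_zero [simp]: "nr 0 = 0"
  using nr_eq_0_iff by simp

lemma nr_minus: "nr (- x) = nr x"
  using nr_scale[of "- 1" x] av_minus_one by (simp add: scale_minus_left)

lemma nr_nonneg: "nr x \<ge> 0"
  using nr_add[of x "- x"] nr_minus[of x] by simp

lemma nr_commute: "nr (x - y) = nr (y - x)"
  using nr_minus[of "x - y"] by simp

lemma nr_triangle: "nr (x - z) \<le> max (nr (x - y)) (nr (y - z))"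
  using nr_add[of "x - y" "y - z"] by simp

lemma nr_add_le: "nr (x + y) \<le> nr x + nr y"
  using nr_add[of x y] nr_nonneg[of x] nr_nonneg[of y] by linarith

lemma nr_diff_le: "nr (x - y) \<le> nr x + nr y"
  using nr_add_le[of x "- y"] nr_minus[of y] by simp

lemma converges_if_steps_tendsto_zero:
  assumes steps: "\<And>n. nr (s (Suc n) - s n) \<le> d n" and "d \<longlonglongrightarrow> 0"
  shows "\<exists>l. (\<lambda>n. nr (s n - l)) \<longlonglongrightarrow> 0"
proof -
  have "\<exists>N. \<forall>m\<ge>N. \<forall>n\<ge>N. nr (s m - s n) < e" if "e > 0" for e
  proof -
    obtain N where N: "\<And>n. n \<ge> N \<Longrightarrow> d n < e"
      using LIMSEQ_D[OF \<open>d \<longlonglongrightarrow> 0\<close> \<open>e > 0\<close>] by force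
    have from_N: "nr (s m - s N) < e" if "m \<ge> N" for m
      using that
    proof (induction m rule: dec_induct)
      case base
      then show ?case using \<open>e > 0\<close> by simp
    next
      case (step m)
      have "nr (s (Suc m) - s m) < e"
        using steps[of m] N[OF step(1)] by linarith
      then show ?case
        using nr_triangle[of "s (Suc m)" "s N" "s m"] step.IH by simp
    qed
    have "nr (s m - s n) < e" if "m \<ge> N" "n \<ge> N" for m n
      using nr_triangle[of "s m" "s n" "s N"] from_N[OF that(1)] from_N[OF that(2)]
        nr_commute[of "s N" "s n"] by simp
    then show ?thesis by blast
  qed
  with complete show ?thesis
    unfolding complete_wrt_def by blast
qed

lemma nr_limit_diff_le:
  assumes "(\<lambda>n. nr (s n - l)) \<longlonglongrightarrow> 0" and "\<And>n. nr (s n - a) \<le> B"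
  shows "nr (l - a) \<le> B"
proof -
  have "nr (l - a) \<le> nr (s n - l) + B" for n
    using nr_triangle[of l a "s n"] nr_commute[of l "s n"] assms(2)[of n]
      nr_nonneg[of "s n - l"] nr_nonneg[of "s n - a"] by linarith
  moreover have "(\<lambda>n. nr (s n - l) + B) \<longlonglongrightarrow> 0 + B"
    by (intro tendsto_add assms(1) tendsto_const)
  ultimately show ?thesis
    using LIMSEQ_le_const by fastforce
qed

lemma eq_zero_if_nr_le_null_seq:
  assumes "\<And>n. nr x \<le> b n" and "b \<longlonglongrightarrow> 0"
  shows "x = 0"
proof -
  have "nr x \<le> 0"
    using LIMSEQ_le_const[OF assms(2)] assms(1) by blast
  then show ?thesis
    using nr_nonneg[of x] nr_eq_0_iff by simp
qed

lemma nr_Dop_le: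
  "nr (Dop sm k F x y) \<le> nr (F (gmul k x + y)) + nr (F (gmul k x - y))
     + av (of_nat k) * (nr (F (x + y)) + nr (F (x - y)))
     + av (2 * (of_nat k ^ 3 - of_nat k)) * nr (F x)"
proof -
  let ?u = "F (gmul k x + y) + F (gmul k x - y)" and ?v = "F (x + y) + F (x - y)"
  have "nr (Dop sm k F x y) \<le> nr (?u - sm (of_nat k) ?v) + nr (sm (2 * (of_nat k ^ 3 - of_nat k)) (F x))"
    unfolding Dop_def by (rule nr_diff_le)
  moreover have "nr (?u - sm (of_nat k) ?v) \<le> nr ?u + nr (sm (of_nat k) ?v)"
    by (rule nr_diff_le)
  moreover have "nr (sm (of_nat k) ?v) \<le> av (of_nat k) * (nr (F (x + y)) + nr (F (x - y)))"
    unfolding nr_scale by (intro mult_left_mono nr_add_le av_nonneg)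
  ultimately show ?thesis
    using nr_add_le[of "F (gmul k x + y)" "F (gmul k x - y)"] unfolding nr_scale by linarith
qed

lemma Dop_tendsto:
  assumes "\<And>u. (\<lambda>n. nr (F n u - G u)) \<longlonglongrightarrow> 0"
  shows "(\<lambda>n. nr (Dop sm k (F n) x y - Dop sm k G x y)) \<longlonglongrightarrow> 0"
proof (rule tendsto_sandwich[where f = "\<lambda>_. 0"])
  let ?e = "\<lambda>u n. nr (F n u - G u)"
  show "\<forall>\<^sub>F n in sequentially. 0 \<le> nr (Dop sm k (F n) x y - Dop sm k G x y)"
    by (simp add: nr_nonneg)
  show "\<forall>\<^sub>F n in sequentially. nr (Dop sm k (F n) x y - Dop sm k G x y)
      \<le> ?e (gmul k x + y) n + ?e (gmul k x - y) n + av (of_nat k) * (?e (x + y) n + ?e (x - y) n)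
        + av (2 * (of_nat k ^ 3 - of_nat k)) * ?e x n"
    using nr_Dop_le[of k "\<lambda>z. F _ z - G z" x y] by (simp add: Dop_diff)
  show "(\<lambda>n. ?e (gmul k x + y) n + ?e (gmul k x - y) n + av (of_nat k) * (?e (x + y) n + ?e (x - y) n)
        + av (2 * (of_nat k ^ 3 - of_nat k)) * ?e x n) \<longlonglongrightarrow> 0"
    by (intro tendsto_add_zero tendsto_mult_right_zero assms)
qed (rule tendsto_const)

lemma cubic_maps_eq_if_scaled_bounds_vanish:
  assumes "(of_nat k :: 'k) \<noteq> 0" and "(2::'k) \<noteq> 0"
    and "cubic_map sm k C1" and "cubic_map sm k C2"
    and "\<And>x. nr (C1 x - f x) \<le> B x" and "\<And>x. nr (C2 x - f x) \<le> B x"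
    and "\<And>x. (\<lambda>i. B (gmul (k ^ i) x) / av (of_nat k) ^ (3 * i)) \<longlonglongrightarrow> 0"
  shows "C1 = C2"
proof
  fix x
  have "nr (C1 x - C2 x) \<le> B (gmul (k ^ i) x) / av (of_nat k) ^ (3 * i)" for i
  proof -
    define z where "z = gmul (k ^ i) x"
    have "C1 z - C2 z = sm (of_nat k ^ (3 * i)) (C1 x - C2 x)"
      unfolding z_def cubic_map_gmul_power[OF assms(3,2)] cubic_map_gmul_power[OF assms(4,2)]
      by (simp add: scale_right_diff_distrib)
    then have "nr (C1 z - C2 z) = av (of_nat k) ^ (3 * i) * nr (C1 x - C2 x)"
      by (simp add: nr_scale av_power)
    moreover have "nr (C1 z - C2 z) \<le> B z"
      using nr_triangle[of "C1 z" "C2 z" "f z"] assms(5,6)[of z] nr_commute[of "f z" "C2 z"] by simp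
    moreover have "av (of_nat k) ^ (3 * i) > 0"
      using av_pos[OF assms(1)] by simp
    ultimately show ?thesis
      unfolding z_def by (simp add: pos_le_divide_eq mult.commute)
  qed
  then have "C1 x - C2 x = 0"
    by (rule eq_zero_if_nr_le_null_seq) (rule assms(7))
  then show "C1 x = C2 x" by simp
qed

end

locale cubic_stability = nonarch_normed_space sm av nr
  for sm :: "'k::field \<Rightarrow> 'x::ab_group_add \<Rightarrow> 'x" and av nr +
  fixes k :: nat and \<phi> :: "'g::ab_group_add \<Rightarrow> 'g \<Rightarrow> real" and f :: "'g \<Rightarrow> 'x"
  assumes av_two_k_cube_nonzero: "av (2 * of_nat k ^ 3) \<noteq> 0"
    and phi_nonneg: "\<phi> x y \<ge> 0"
    and phi_scaled_tendsto_zero: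
      "(\<lambda>n. \<phi> (gmul (k ^ n) x) (gmul (k ^ n) y) / av (of_nat k) ^ (3 * n)) \<longlonglongrightarrow> 0"
    and convergent_phi_max:
      "convergent (\<lambda>n. Max ((\<lambda>j. \<phi> (gmul (k ^ j) x) 0 / av (of_nat k) ^ (3 * j)) ` {..<n}))"
    and nr_Dop_f_le: "nr (Dop sm k f x y) \<le> \<phi> x y"
begin

lemma of_nat_k_nonzero: "(of_nat k :: 'k) \<noteq> 0" and two_nonzero: "(2::'k) \<noteq> 0"
  using av_two_k_cube_nonzero av_eq_0_iff by auto

lemma av_k_pos: "av (of_nat k) > 0"
  using av_pos[OF of_nat_k_nonzero] .

lemma av_two_k_cube_pos: "av (2 * of_nat k ^ 3) > 0"
  using av_pos av_two_k_cube_nonzero av_eq_0_iff by blast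

definition scaled_phi :: "'g \<Rightarrow> nat \<Rightarrow> real" where
  "scaled_phi x j = \<phi> (gmul (k ^ j) x) 0 / av (of_nat k) ^ (3 * j)"

definition phi_tilde :: "'g \<Rightarrow> real" where
  "phi_tilde x = lim (\<lambda>n. Max (scaled_phi x ` {..<n}))"

definition hyers_seq :: "nat \<Rightarrow> 'g \<Rightarrow> 'x" where
  "hyers_seq n x = sm (inverse (of_nat k ^ (3 * n))) (f (gmul (k ^ n) x))"

definition cubic_limit :: "'g \<Rightarrow> 'x" where
  "cubic_limit x = (SOME l. (\<lambda>n. nr (hyers_seq n x - l)) \<longlonglongrightarrow> 0)"

lemma scaled_phi_eq: "scaled_phi x = (\<lambda>j. \<phi> (gmul (k ^ j) x) 0 / av (of_nat k) ^ (3 * j))"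
  by (simp add: scaled_phi_def fun_eq_iff)

lemma scaled_phi_nonneg: "scaled_phi x j \<ge> 0"
  unfolding scaled_phi_def using phi_nonneg av_k_pos by simp

lemma scaled_phi_tendsto_zero: "scaled_phi x \<longlonglongrightarrow> 0"
  using phi_scaled_tendsto_zero[of x 0] by (simp add: scaled_phi_eq)

lemma Max_scaled_phi_tendsto: "(\<lambda>n. Max (scaled_phi x ` {..<n})) \<longlonglongrightarrow> phi_tilde x"
  using convergent_phi_max[of x] unfolding phi_tilde_def scaled_phi_eq
  by (simp add: convergent_LIMSEQ_iff)

lemma hyers_seq_step:
  "nr (hyers_seq (Suc n) x - hyers_seq n x) \<le> scaled_phi x n / av (2 * of_nat k ^ 3)"
proof -
  define q :: 'k where "q = of_nat k"
  define y where "y = gmul (k ^ n) x"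
  define c where "c = inverse (2 * q ^ 3 * q ^ (3 * n))"
  have "q \<noteq> 0"
    unfolding q_def by (rule of_nat_k_nonzero)
  then have "c * 2 = inverse (q ^ (3 * Suc n))" and "c * (2 * q ^ 3) = inverse (q ^ (3 * n))"
    unfolding c_def using two_nonzero by (simp_all add: field_simps power_add)
  then have "hyers_seq (Suc n) x - hyers_seq n x = sm c (Dop sm k f y 0)"
    unfolding Dop_zero_right hyers_seq_def y_def q_def
    by (simp add: gmul_mult scale_right_diff_distrib)
  then have "nr (hyers_seq (Suc n) x - hyers_seq n x) = av c * nr (Dop sm k f y 0)"
    by (simp add: nr_scale)
  also have "\<dots> \<le> av c * \<phi> y 0"
    using nr_Dop_f_le av_nonneg by (simp add: mult_left_mono)
  also have "av c = inverse (av (2 * q ^ 3) * av q ^ (3 * n))"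
    unfolding c_def by (simp only: av_inverse av_mult[of "2 * q ^ 3"] av_power)
  finally show ?thesis
    unfolding scaled_phi_def y_def q_def by (simp add: field_simps)
qed

lemma hyers_seq_tendsto_cubic_limit: "(\<lambda>n. nr (hyers_seq n x - cubic_limit x)) \<longlonglongrightarrow> 0"
proof -
  have "(\<lambda>n. scaled_phi x n / av (2 * of_nat k ^ 3)) \<longlonglongrightarrow> 0"
    using tendsto_divide_zero[OF scaled_phi_tendsto_zero] .
  then have "\<exists>l. (\<lambda>n. nr (hyers_seq n x - l)) \<longlonglongrightarrow> 0"
    by (rule converges_if_steps_tendsto_zero[where s = "\<lambda>n. hyers_seq n x", OF hyers_seq_step])
  then show ?thesis
    unfolding cubic_limit_def by (rule someI_ex)
qed

text \<open>The \<open>insert 0\<close> avoids the junk value \<open>Max {}\<close> at \<open>n = 0\<close>.\<close>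

lemma nr_hyers_seq_diff_le:
  "nr (hyers_seq n x - f x) \<le> Max (insert 0 (scaled_phi x ` {..<n})) / av (2 * of_nat k ^ 3)"
proof (induction n)
  case 0
  then show ?case by (simp add: hyers_seq_def)
next
  case (Suc n)
  have "nr (hyers_seq (Suc n) x - f x)
      \<le> max (nr (hyers_seq (Suc n) x - hyers_seq n x)) (nr (hyers_seq n x - f x))"
    by (rule nr_triangle)
  also have "\<dots> \<le> max (scaled_phi x n / av (2 * of_nat k ^ 3))
      (Max (insert 0 (scaled_phi x ` {..<n})) / av (2 * of_nat k ^ 3))"
    by (rule max.mono[OF hyers_seq_step Suc.IH])
  also have "\<dots> = max (scaled_phi x n) (Max (insert 0 (scaled_phi x ` {..<n}))) / av (2 * of_nat k ^ 3)"
    using av_two_k_cube_pos by (simp add: max_divide_distrib_right)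
  finally show ?case
    by (simp only: lessThan_Suc image_insert insert_commute[of 0] Max_insert finite_insert
        finite_imageI finite_lessThan insert_not_empty not_False_eq_True)
qed

lemma Max_insert_zero_le_phi_tilde: "Max (insert 0 (scaled_phi x ` {..<n})) \<le> phi_tilde x"
proof (rule LIMSEQ_le_const[OF Max_scaled_phi_tendsto], intro exI allI impI)
  fix m assume "m \<ge> Suc n"
  then have "scaled_phi x j \<le> Max (scaled_phi x ` {..<m})" if "j \<le> n" for j
    using that by (intro Max_ge) auto
  moreover have "0 \<le> Max (scaled_phi x ` {..<m})"
    using calculation[of 0] scaled_phi_nonneg[of x 0] by linarith
  ultimately show "Max (insert 0 (scaled_phi x ` {..<n})) \<le> Max (scaled_phi x ` {..<m})"
    by (intro Max.boundedI) auto
qed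

lemma nr_cubic_limit_diff_le:
  "nr (cubic_limit x - f x) \<le> (1 / av (2 * of_nat k ^ 3)) * phi_tilde x"
proof -
  have "nr (hyers_seq n x - f x) \<le> phi_tilde x / av (2 * of_nat k ^ 3)" for n
    using av_two_k_cube_pos
    by (intro order_trans[OF nr_hyers_seq_diff_le divide_right_mono[OF Max_insert_zero_le_phi_tilde]]) simp
  then show ?thesis
    using nr_limit_diff_le[OF hyers_seq_tendsto_cubic_limit] by simp
qed

lemma cubic_map_cubic_limit: "cubic_map sm k cubic_limit"
  unfolding cubic_map_def
proof (intro allI)
  fix x y
  let ?\<psi> = "\<lambda>n. \<phi> (gmul (k ^ n) x) (gmul (k ^ n) y) / av (of_nat k) ^ (3 * n)"
  have Dop_hyers_seq: "nr (Dop sm k (hyers_seq n) x y) \<le> ?\<psi> n" for n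
  proof -
    have "hyers_seq n = (\<lambda>z. sm (inverse (of_nat k ^ (3 * n))) (f (gmul (k ^ n) z)))"
      by (simp add: hyers_seq_def fun_eq_iff)
    then have "nr (Dop sm k (hyers_seq n) x y)
        = inverse (av (of_nat k) ^ (3 * n)) * nr (Dop sm k f (gmul (k ^ n) x) (gmul (k ^ n) y))"
      by (simp add: Dop_scale_gmul nr_scale av_inverse av_power)
    also have "\<dots> \<le> inverse (av (of_nat k) ^ (3 * n)) * \<phi> (gmul (k ^ n) x) (gmul (k ^ n) y)"
      using nr_Dop_f_le av_k_pos by (simp add: mult_left_mono)
    finally show ?thesis
      by (simp add: divide_inverse mult.commute)
  qed
  have "nr (Dop sm k cubic_limit x y)
      \<le> nr (Dop sm k (hyers_seq n) x y - Dop sm k cubic_limit x y) + ?\<psi> n" for n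
    using nr_diff_le[of "Dop sm k (hyers_seq n) x y" "Dop sm k (hyers_seq n) x y - Dop sm k cubic_limit x y"]
      Dop_hyers_seq[of n] by simp
  moreover have "(\<lambda>n. nr (Dop sm k (hyers_seq n) x y - Dop sm k cubic_limit x y) + ?\<psi> n) \<longlonglongrightarrow> 0"
    using tendsto_add[OF Dop_tendsto[OF hyers_seq_tendsto_cubic_limit] phi_scaled_tendsto_zero] by simp
  ultimately show "Dop sm k cubic_limit x y = 0"
    by (rule eq_zero_if_nr_le_null_seq)
qed

lemma phi_tilde_gmul_power:
  "phi_tilde (gmul (k ^ i) x) / av (of_nat k) ^ (3 * i) = lim (\<lambda>n. Max (scaled_phi x ` {i..<n + i}))"
proof -
  define c where "c = av (of_nat k) ^ (3 * i)"
  have "c > 0"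
    unfolding c_def using av_k_pos by simp
  have shift: "scaled_phi (gmul (k ^ i) x) j / c = scaled_phi x (j + i)" for j
  proof -
    have "gmul (k ^ j) (gmul (k ^ i) x) = gmul (k ^ (j + i)) x"
      by (simp add: gmul_mult[symmetric] power_add)
    moreover have "av (of_nat k) ^ (3 * (j + i)) = av (of_nat k) ^ (3 * j) * c"
      unfolding c_def by (simp add: power_add distrib_left)
    ultimately show ?thesis
      by (simp add: scaled_phi_def)
  qed
  have "Max (scaled_phi (gmul (k ^ i) x) ` {..<Suc n}) / c = Max (scaled_phi x ` {i..<Suc n + i})" for n
  proof -
    have "mono (\<lambda>t::real. t / c)"
      using \<open>c > 0\<close> by (simp add: mono_def divide_right_mono)
    then have "Max (scaled_phi (gmul (k ^ i) x) ` {..<Suc n}) / c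
        = Max ((\<lambda>t. t / c) ` scaled_phi (gmul (k ^ i) x) ` {..<Suc n})"
      by (rule mono_Max_commute) auto
    also have "(\<lambda>t. t / c) ` scaled_phi (gmul (k ^ i) x) ` {..<Suc n}
        = scaled_phi x ` (\<lambda>j. j + i) ` {..<Suc n}"
      by (simp only: image_image shift)
    also have "(\<lambda>j. j + i) ` {..<Suc n} = {i..<Suc n + i}"
      using image_add_atLeastLessThan'[of i 0 "Suc n"] by (simp add: atLeast0LessThan)
    finally show ?thesis .
  qed
  moreover have "(\<lambda>n. Max (scaled_phi (gmul (k ^ i) x) ` {..<n}) / c)
      \<longlonglongrightarrow> phi_tilde (gmul (k ^ i) x) / c"
    using \<open>c > 0\<close> by (intro tendsto_divide Max_scaled_phi_tendsto tendsto_const) simp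
  then have "(\<lambda>n. Max (scaled_phi (gmul (k ^ i) x) ` {..<Suc n}) / c)
      \<longlonglongrightarrow> phi_tilde (gmul (k ^ i) x) / c"
    by (rule LIMSEQ_Suc)
  ultimately have "(\<lambda>n. Max (scaled_phi x ` {i..<Suc n + i})) \<longlonglongrightarrow> phi_tilde (gmul (k ^ i) x) / c"
    by simp
  then have "(\<lambda>n. Max (scaled_phi x ` {i..<n + i})) \<longlonglongrightarrow> phi_tilde (gmul (k ^ i) x) / c"
    by (rule LIMSEQ_imp_Suc)
  then show ?thesis
    unfolding c_def by (rule limI[symmetric])
qed

lemma cubic_approximation_unique:
  assumes "\<And>x. (\<lambda>i. lim (\<lambda>n. Max (scaled_phi x ` {i..<n + i}))) \<longlonglongrightarrow> 0"
    and "cubic_map sm k C1" "\<And>x. nr (C1 x - f x) \<le> (1 / av (2 * of_nat k ^ 3)) * phi_tilde x"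
    and "cubic_map sm k C2" "\<And>x. nr (C2 x - f x) \<le> (1 / av (2 * of_nat k ^ 3)) * phi_tilde x"
  shows "C1 = C2"
proof (rule cubic_maps_eq_if_scaled_bounds_vanish[OF of_nat_k_nonzero two_nonzero assms(2,4,3,5)])
  fix x
  have "(\<lambda>i. (1 / av (2 * of_nat k ^ 3)) * lim (\<lambda>n. Max (scaled_phi x ` {i..<n + i}))) \<longlonglongrightarrow> 0"
    by (rule tendsto_mult_right_zero[OF assms(1)])
  then show "(\<lambda>i. (1 / av (2 * of_nat k ^ 3)) * phi_tilde (gmul (k ^ i) x) / av (of_nat k) ^ (3 * i)) \<longlonglongrightarrow> 0"
    by (simp only: phi_tilde_gmul_power[symmetric] times_divide_eq_right)
qed

end

theorem theorem2p1:
  fixes av :: "'k::field \<Rightarrow> real"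
    and sm :: "'k \<Rightarrow> 'x::ab_group_add \<Rightarrow> 'x"
    and nr :: "'x \<Rightarrow> real"
    and k :: nat
    and \<phi> :: "'g::ab_group_add \<Rightarrow> 'g \<Rightarrow> real"
    and f :: "'g \<Rightarrow> 'x"
  assumes "nonarch_field av" and "nontrivial_val av"
    and "vector_space sm"
    and "nonarch_norm av sm nr" and "complete_wrt nr"
    and "av (2 * (of_nat k) ^ 3) \<noteq> 0"
    and "\<forall>x y. \<phi> x y \<ge> 0"
    and "\<forall>x y. (\<lambda>n. \<phi> (gmul (k ^ n) x) (gmul (k ^ n) y) / av (of_nat k) ^ (3 * n))
                 \<longlonglongrightarrow> 0"
    and "\<forall>x. convergent (\<lambda>n. Max ((\<lambda>j. \<phi> (gmul (k ^ j) x) 0 / av (of_nat k) ^ (3 * j)) ` {..<n}))"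
    and "\<forall>x y. nr (Dop sm k f x y) \<le> \<phi> x y"
  shows "(\<exists>C. cubic_map sm k C \<and>
            (\<forall>x. nr (C x - f x) \<le> (1 / av (2 * (of_nat k) ^ 3)) *
               lim (\<lambda>n. Max ((\<lambda>j. \<phi> (gmul (k ^ j) x) 0 / av (of_nat k) ^ (3 * j)) ` {..<n}))))
       \<and> ((\<forall>x. (\<lambda>i. lim (\<lambda>n. Max ((\<lambda>j. \<phi> (gmul (k ^ j) x) 0 / av (of_nat k) ^ (3 * j)) ` {i..<n + i})))
                 \<longlonglongrightarrow> 0)
          \<longrightarrow> (\<exists>!C. cubic_map sm k C \<and>
            (\<forall>x. nr (C x - f x) \<le> (1 / av (2 * (of_nat k) ^ 3)) *
               lim (\<lambda>n. Max ((\<lambda>j. \<phi> (gmul (k ^ j) x) 0 / av (of_nat k) ^ (3 * j)) ` {..<n})))))"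
proof -
  interpret cubic_stability sm av nr k \<phi> f
    using assms(1,3-10)
    by (intro cubic_stability.intro nonarch_normed_space.intro nonarch_normed_space_axioms.intro
        cubic_stability_axioms.intro) auto
  show ?thesis
    using cubic_map_cubic_limit nr_cubic_limit_diff_le cubic_approximation_unique
    unfolding phi_tilde_def scaled_phi_eq by blast
qed

end
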